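(* Fix $p\in(0,1)$ and let $\Phi_{\mathsf{Even}}=\sum_{v\in\mathsf{Even}}2^{-N_p(v)}$, $\Phi_{\mathsf{Odd}}=\sum_{v\in\mathsf{Odd}}2^{-N_p(v)}$. Then: 1. $\mathbb E[\Phi_{\mathsf{Even}}]=\mathbb E[\Phi_{\mathsf{Odd}}]=\tfrac12(2-p)^d$; 2. $\mathrm{Var}(\Phi_{\mathsf{Even}})=\mathrm{Var}(\Phi_{\mathsf{Odd}})=\tfrac12(\tfrac{4-3p}{2})^d(1-o(1))$ as $d\to\infty$; 3. $\mathrm{Cov}(\Phi_{\mathsf{Even}},\Phi_{\mathsf{Odd}})/\mathrm{Var}(\Phi_{\mathsf{Even}})$ decays exponentially in $d$.
   Context: Setup: - $Q_d=\{0,1\}^d$ is the hypercube graph. - $\mathsf{Even}$ and $\mathsf{Odd}$ are the vertices of even and odd Hamming weight. - $Q_{d,p}$ is obtained by retaining each edge independently with probability $p$. - $N_p(v)$ is the number of neighbors of $v$ in $Q_{d,p}$. *)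

theory Defs
  imports "HOL-Probability.Probability" "HOL-Library.Landau_Symbols"
begin

definition hc_vertices :: "nat \<Rightarrow> bool list set" where
  "hc_vertices d = {xs. length xs = d}"

definition hweight :: "bool list \<Rightarrow> nat" where
  "hweight xs = length (filter id xs)"

definition hdist :: "bool list \<Rightarrow> bool list \<Rightarrow> nat" where
  "hdist xs ys = length (filter (\<lambda>(a,b). a \<noteq> b) (zip xs ys))"

definition hc_edges :: "nat \<Rightarrow> bool list set set" where
  "hc_edges d = {{u, v} | u v. u \<in> hc_vertices d \<and> v \<in> hc_vertices d \<and> hdist u v = 1}"

definition Even_vertices :: "nat \<Rightarrow> bool list set" where
  "Even_vertices d = {v \<in> hc_vertices d. even (hweight v)}"

definition Odd_vertices :: "nat \<Rightarrow> bool list set" where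
  "Odd_vertices d = {v \<in> hc_vertices d. odd (hweight v)}"

text \<open>The random subgraph Q_{d,p}: each edge retained independently with probability p.
  An outcome is the indicator function of the retained edge set.\<close>
definition Qdp :: "nat \<Rightarrow> real \<Rightarrow> (bool list set \<Rightarrow> bool) pmf" where
  "Qdp d p = Pi_pmf (hc_edges d) False (\<lambda>_. bernoulli_pmf p)"

definition Np :: "nat \<Rightarrow> (bool list set \<Rightarrow> bool) \<Rightarrow> bool list \<Rightarrow> nat" where
  "Np d G v = card {e \<in> hc_edges d. v \<in> e \<and> G e}"

definition Phi_Even :: "nat \<Rightarrow> (bool list set \<Rightarrow> bool) \<Rightarrow> real" where
  "Phi_Even d G = (\<Sum>v\<in>Even_vertices d. (1/2) ^ Np d G v)"

definition Phi_Odd :: "nat \<Rightarrow> (bool list set \<Rightarrow> bool) \<Rightarrow> real" where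
  "Phi_Odd d G = (\<Sum>v\<in>Odd_vertices d. (1/2) ^ Np d G v)"

definition pmf_cov :: "'a pmf \<Rightarrow> ('a \<Rightarrow> real) \<Rightarrow> ('a \<Rightarrow> real) \<Rightarrow> real" where
  "pmf_cov M X Y = measure_pmf.expectation M (\<lambda>x. (X x - measure_pmf.expectation M X) *
                                                 (Y x - measure_pmf.expectation M Y))"

end

theory Submission
  imports Defs
begin

text \<open>
  The weight 2^(-N_p(v)) is a product, over the d edges at v, of independent factors that equal 1/2
  if the edge is retained and 1 otherwise. Hence its mean is (1 - p/2)^d, and for two vertices
  sharing k edges the mean of the product of their weights is (1 - p/2)^(2(d - k)) (1 - 3p/4)^k,
  where k = d for equal vertices, k = 1 for adjacent ones and k = 0 otherwise. Vertices of equal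
  parity are never adjacent, so the variance of Phi_Even consists of its 2^(d-1) diagonal terms
  (1 - 3p/4)^d - (1 - p/2)^(2d), while its covariance with Phi_Odd collects one term
  (1 - 3p/4 - (1 - p/2)^2) (1 - p/2)^(2(d-1)) per edge. As (1 - p/2)^2 < 1 - 3p/4, the ratio of the
  two is at most d r^(d-1) with r = (1 - p/2)^2 / (1 - 3p/4) < 1.
\<close>

section \<open>Independent Bernoulli variables and covariance\<close>

lemma prod_if_mem_const:
  fixes x :: "'b::comm_monoid_mult"
  assumes "finite I" "A \<subseteq> I"
  shows "(\<Prod>e\<in>I. if e \<in> A then x else 1) = x ^ card A"
  using prod.inter_restrict[OF assms(1), of "\<lambda>_. x" A] assms(2)
  by (simp add: Int_absorb1)

lemma finite_set_Pi_pmf: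
  assumes "finite I" "\<And>i. i \<in> I \<Longrightarrow> finite (set_pmf (q i))"
  shows "finite (set_pmf (Pi_pmf I dflt q))"
  using set_Pi_pmf_subset'[OF assms(1)] finite_PiE_dflt[OF assms(1)] assms(2)
  by (metis comp_apply finite_subset)

lemma expectation_Pi_bernoulli_prod:
  fixes c :: "'a \<Rightarrow> real"
  assumes "finite I" "0 \<le> p" "p \<le> 1" "\<And>e. e \<in> I \<Longrightarrow> 0 \<le> c e"
  shows "measure_pmf.expectation (Pi_pmf I dflt (\<lambda>_. bernoulli_pmf p))
           (\<lambda>G. \<Prod>e\<in>I. if G e then c e else 1)
       = (\<Prod>e\<in>I. 1 - p + p * c e)"
proof -
  have "measure_pmf.expectation (Pi_pmf I dflt (\<lambda>_. bernoulli_pmf p))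
          (\<lambda>G. \<Prod>e\<in>I. if G e then c e else 1)
      = (\<Prod>e\<in>I. measure_pmf.expectation (bernoulli_pmf p) (\<lambda>b. if b then c e else 1))"
    using assms by (intro expectation_prod_Pi_pmf) (auto intro: integrable_measure_pmf_finite)
  also have "\<dots> = (\<Prod>e\<in>I. 1 - p + p * c e)"
    using assms by (intro prod.cong) (auto simp: algebra_simps)
  finally show ?thesis .
qed

lemma expectation_Pi_bernoulli_power_card:
  fixes x y :: real
  assumes I: "finite I" "A \<subseteq> I" "B \<subseteq> I" and p: "0 \<le> p" "p \<le> 1" and xy: "0 \<le> x" "0 \<le> y"
  shows "measure_pmf.expectation (Pi_pmf I dflt (\<lambda>_. bernoulli_pmf p))
           (\<lambda>G. x ^ card {e\<in>A. G e} * y ^ card {e\<in>B. G e})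
       = (1 - p + p * x) ^ card (A - B) * (1 - p + p * y) ^ card (B - A)
         * (1 - p + p * (x * y)) ^ card (A \<inter> B)"
proof -
  define c where "c e = (if e \<in> A then x else 1) * (if e \<in> B then y else 1)" for e
  have "x ^ card {e\<in>A. G e} * y ^ card {e\<in>B. G e} = (\<Prod>e\<in>I. if G e then c e else 1)" for G
  proof -
    have "x ^ card {e\<in>A. G e} = (\<Prod>e\<in>I. if e \<in> {e\<in>A. G e} then x else 1)"
         "y ^ card {e\<in>B. G e} = (\<Prod>e\<in>I. if e \<in> {e\<in>B. G e} then y else 1)"
      by (rule prod_if_mem_const[symmetric]; use I in auto)+
    then have "x ^ card {e\<in>A. G e} * y ^ card {e\<in>B. G e}
        = (\<Prod>e\<in>I. if e \<in> {e\<in>A. G e} then x else 1) * (\<Prod>e\<in>I. if e \<in> {e\<in>B. G e} then y else 1)"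
      by simp
    also have "\<dots> = (\<Prod>e\<in>I. if G e then c e else 1)"
      unfolding prod.distrib[symmetric] c_def by (intro prod.cong) auto
    finally show ?thesis .
  qed
  then have "measure_pmf.expectation (Pi_pmf I dflt (\<lambda>_. bernoulli_pmf p))
               (\<lambda>G. x ^ card {e\<in>A. G e} * y ^ card {e\<in>B. G e})
           = (\<Prod>e\<in>I. 1 - p + p * c e)"
    using I p xy by (simp add: expectation_Pi_bernoulli_prod c_def)
  also have "\<dots> = (\<Prod>e\<in>I. (if e \<in> A - B then 1 - p + p * x else 1)
                  * (if e \<in> B - A then 1 - p + p * y else 1)
                  * (if e \<in> A \<inter> B then 1 - p + p * (x * y) else 1))"
    by (intro prod.cong) (auto simp: c_def)
  also have "\<dots> = (1 - p + p * x) ^ card (A - B) * (1 - p + p * y) ^ card (B - A)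
                  * (1 - p + p * (x * y)) ^ card (A \<inter> B)"
    unfolding prod.distrib using I by (subst (1 2 3) prod_if_mem_const) auto
  finally show ?thesis .
qed

lemma pmf_cov_eq:
  assumes "finite (set_pmf M)"
  shows "pmf_cov M X Y = measure_pmf.expectation M (\<lambda>x. X x * Y x)
                         - measure_pmf.expectation M X * measure_pmf.expectation M Y"
proof -
  let ?E = "measure_pmf.expectation M"
  have "pmf_cov M X Y = ?E (\<lambda>x. X x * Y x - ?E X * Y x - ?E Y * X x + ?E X * ?E Y)"
    unfolding pmf_cov_def by (intro Bochner_Integration.integral_cong) (auto simp: algebra_simps)
  also have "\<dots> = ?E (\<lambda>x. X x * Y x) - ?E X * ?E Y"
    using assms by (simp add: integrable_measure_pmf_finite prob_space.prob_space measure_pmf.prob_space)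
  finally show ?thesis .
qed

lemma pmf_cov_sum_sum:
  assumes "finite (set_pmf M)"
  shows "pmf_cov M (\<lambda>x. \<Sum>i\<in>I. X i x) (\<lambda>x. \<Sum>j\<in>J. Y j x) = (\<Sum>i\<in>I. \<Sum>j\<in>J. pmf_cov M (X i) (Y j))"
  using assms
  by (simp add: pmf_cov_eq sum_product sum_subtractf integrable_measure_pmf_finite)

lemma variance_eq_pmf_cov: "measure_pmf.variance M X = pmf_cov M X X"
  by (simp add: pmf_cov_def power2_eq_square)

section \<open>The hypercube\<close>

definition flip :: "nat \<Rightarrow> bool list \<Rightarrow> bool list" where
  "flip i v = v[i := \<not> v ! i]"

definition hc_neighbours :: "nat \<Rightarrow> bool list \<Rightarrow> bool list set" where
  "hc_neighbours d u = {v. {u, v} \<in> hc_edges d}"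

definition hc_incident :: "nat \<Rightarrow> bool list \<Rightarrow> bool list set set" where
  "hc_incident d u = {e \<in> hc_edges d. u \<in> e}"

lemma finite_hc_vertices: "finite (hc_vertices d)"
  unfolding hc_vertices_def using finite_lists_length_eq[of "UNIV::bool set" d] by simp

lemma card_hc_vertices: "card (hc_vertices d) = 2 ^ d"
  unfolding hc_vertices_def using card_lists_length_eq[of "UNIV::bool set" d] by simp

lemma finite_hc_edges: "finite (hc_edges d)"
proof -
  have "hc_edges d \<subseteq> Pow (hc_vertices d)"
    unfolding hc_edges_def by auto
  then show ?thesis
    using finite_hc_vertices by (meson finite_Pow_iff finite_subset)
qed

lemma length_flip [simp]: "length (flip i v) = length v"
  by (simp add: flip_def)

lemma flip_flip [simp]: "flip i (flip i v) = v"
  by (cases "i < length v") (simp_all add: flip_def list_update_beyond)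

lemma inj_flip: "inj (flip i)"
  by (metis flip_flip injI)

lemma nth_flip: "i < length v \<Longrightarrow> flip i v ! j = (if j = i then \<not> v ! i else v ! j)"
  by (simp add: flip_def nth_list_update)

lemma even_hweight_flip: "i < length v \<Longrightarrow> even (hweight (flip i v)) \<longleftrightarrow> odd (hweight v)"
proof (induction v arbitrary: i)
  case Nil
  then show ?case by simp
next
  case (Cons b v)
  then show ?case by (cases i) (auto simp: flip_def hweight_def)
qed

lemma hdist_eq_card: "length u = length v \<Longrightarrow> hdist u v = card {i. i < length u \<and> u ! i \<noteq> v ! i}"
  unfolding hdist_def by (simp add: length_filter_conv_card nth_zip cong: conj_cong)

lemma hdist_eq_1_iff_flip:
  assumes "length u = length v"
  shows "hdist u v = 1 \<longleftrightarrow> (\<exists>i<length u. v = flip i u)"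
proof
  assume "hdist u v = 1"
  then obtain i where i: "{j. j < length u \<and> u ! j \<noteq> v ! j} = {i}"
    using assms by (metis hdist_eq_card card_1_singletonE)
  then have "i < length u" by blast
  moreover have "v ! j = flip i u ! j" if "j < length v" for j
  proof (cases "j = i")
    case True
    then have "j \<in> {j. j < length u \<and> u ! j \<noteq> v ! j}" using i by simp
    then have "u ! j \<noteq> v ! j" by simp
    then show ?thesis using True \<open>i < length u\<close> by (simp add: nth_flip)
  next
    case False
    then have "j \<notin> {j. j < length u \<and> u ! j \<noteq> v ! j}" using i by simp
    then have "u ! j = v ! j" using that assms by simp
    then show ?thesis using False \<open>i < length u\<close> by (simp add: nth_flip)
  qed
  then have "v = flip i u"
    using assms by (intro nth_equalityI) simp_all
  ultimately show "\<exists>i<length u. v = flip i u" by blast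
next
  assume "\<exists>i<length u. v = flip i u"
  then obtain i where "i < length u" "v = flip i u" by blast
  then have "{j. j < length u \<and> u ! j \<noteq> v ! j} = {i}"
    by (auto simp: nth_flip)
  then show "hdist u v = 1"
    using assms by (simp add: hdist_eq_card)
qed

lemma hdist_self: "hdist u u = 0"
  by (simp add: hdist_eq_card)

lemma doubleton_in_hc_edges_iff:
  "{u, v} \<in> hc_edges d \<longleftrightarrow> u \<in> hc_vertices d \<and> (\<exists>i<d. v = flip i u)"
proof
  assume "{u, v} \<in> hc_edges d"
  then obtain x y where xy: "{u, v} = {x, y}" "length x = d" "length y = d" "hdist x y = 1"
    unfolding hc_edges_def hc_vertices_def by blast
  then have "x \<noteq> y"
    using hdist_self by force
  then consider "u = x" "v = y" | "u = y" "v = x"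
    using xy(1) by (auto simp: doubleton_eq_iff)
  then show "u \<in> hc_vertices d \<and> (\<exists>i<d. v = flip i u)"
  proof cases
    case 1
    then show ?thesis
      using xy hdist_eq_1_iff_flip[of u v] by (simp add: hc_vertices_def)
  next
    case 2
    then obtain i where "i < d" "u = flip i v"
      using xy hdist_eq_1_iff_flip[of v u] by auto
    then show ?thesis
      using xy 2 by (auto simp: hc_vertices_def)
  qed
next
  assume "u \<in> hc_vertices d \<and> (\<exists>i<d. v = flip i u)"
  then have "u \<in> hc_vertices d" "v \<in> hc_vertices d" "hdist u v = 1"
    using hdist_eq_1_iff_flip[of u v] by (auto simp: hc_vertices_def)
  then show "{u, v} \<in> hc_edges d"
    unfolding hc_edges_def by blast
qed

lemma hc_neighbours_eq:
  "u \<in> hc_vertices d \<Longrightarrow> hc_neighbours d u = (\<lambda>i. flip i u) ` {..<d}"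
  by (auto simp: hc_neighbours_def doubleton_in_hc_edges_iff)

lemma card_hc_neighbours:
  assumes "u \<in> hc_vertices d"
  shows "card (hc_neighbours d u) = d"
proof -
  have "inj_on (\<lambda>i. flip i u) {..<d}"
  proof (rule inj_onI)
    fix i j assume "i \<in> {..<d}" "j \<in> {..<d}" "flip i u = flip j u"
    then have "flip i u ! i = flip j u ! i" by simp
    then show "i = j"
      using assms \<open>i \<in> {..<d}\<close> \<open>j \<in> {..<d}\<close>
      by (auto simp: hc_vertices_def nth_flip split: if_splits)
  qed
  then show ?thesis
    using assms by (simp add: hc_neighbours_eq card_image)
qed

lemma hc_neighbours_subset:
  "hc_neighbours d u \<subseteq> {v \<in> hc_vertices d. even (hweight v) \<longleftrightarrow> odd (hweight u)}"
  by (auto simp: hc_neighbours_def doubleton_in_hc_edges_iff hc_vertices_def even_hweight_flip)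

lemma hc_edge_parity: "{u, v} \<in> hc_edges d \<Longrightarrow> even (hweight v) \<longleftrightarrow> odd (hweight u)"
  using hc_neighbours_subset by (auto simp: hc_neighbours_def)

lemma hc_edge_doubleton: "e \<in> hc_edges d \<Longrightarrow> \<exists>x y. e = {x, y}"
  unfolding hc_edges_def by blast

lemma hc_incident_eq:
  "hc_incident d u = (\<lambda>v. {u, v}) ` hc_neighbours d u"
proof -
  have "\<exists>v. e = {u, v}" if "e \<in> hc_edges d" "u \<in> e" for e
  proof -
    obtain x y where e: "e = {x, y}"
      using hc_edge_doubleton[OF \<open>e \<in> hc_edges d\<close>] by blast
    then consider "u = x" | "u = y"
      using \<open>u \<in> e\<close> by blast
    then show ?thesis
      using e by cases (auto simp: insert_commute)
  qed
  then show ?thesis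
    unfolding hc_incident_def hc_neighbours_def by auto
qed

lemma hc_incident_subset: "hc_incident d u \<subseteq> hc_edges d"
  unfolding hc_incident_def by blast

lemma card_hc_incident:
  assumes "u \<in> hc_vertices d"
  shows "card (hc_incident d u) = d"
proof -
  have "inj_on (\<lambda>v. {u, v}) (hc_neighbours d u)"
    by (rule inj_onI) (auto simp: doubleton_eq_iff)
  then show ?thesis
    using assms by (simp add: hc_incident_eq card_image card_hc_neighbours)
qed

lemma hc_incident_Int:
  assumes "u \<noteq> v"
  shows "hc_incident d u \<inter> hc_incident d v = (if {u, v} \<in> hc_edges d then {{u, v}} else {})"
proof -
  have "e = {u, v}" if "e \<in> hc_incident d u \<inter> hc_incident d v" for e
  proof -
    have e: "e \<in> hc_edges d" "u \<in> e" "v \<in> e"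
      using that unfolding hc_incident_def by auto
    obtain x y where "e = {x, y}"
      using hc_edge_doubleton[OF e(1)] by blast
    then show ?thesis
      using e(2,3) assms by auto
  qed
  moreover have "{u, v} \<in> hc_incident d u \<inter> hc_incident d v \<longleftrightarrow> {u, v} \<in> hc_edges d"
    unfolding hc_incident_def by simp
  ultimately show ?thesis
    by (simp only: split: if_split) blast
qed

lemma Even_Odd_subset_hc_vertices:
  "Even_vertices d \<subseteq> hc_vertices d" "Odd_vertices d \<subseteq> hc_vertices d"
  by (auto simp: Even_vertices_def Odd_vertices_def)

lemma card_Even_Odd_vertices:
  assumes "1 \<le> d"
  shows "card (Even_vertices d) = 2 ^ (d - 1)" "card (Odd_vertices d) = 2 ^ (d - 1)"
proof -
  have fin: "finite (Even_vertices d)" "finite (Odd_vertices d)"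
    using finite_hc_vertices by (auto simp: Even_vertices_def Odd_vertices_def)
  have inj: "inj_on (flip 0) A" for A
    using inj_flip by (rule inj_on_subset) simp
  have "flip 0 v \<in> hc_vertices d \<and> (even (hweight (flip 0 v)) \<longleftrightarrow> odd (hweight v))"
    if "v \<in> hc_vertices d" for v
    using that assms by (simp add: hc_vertices_def even_hweight_flip)
  then have "flip 0 ` Even_vertices d \<subseteq> Odd_vertices d" "flip 0 ` Odd_vertices d \<subseteq> Even_vertices d"
    by (auto simp: Even_vertices_def Odd_vertices_def)
  then have "card (Even_vertices d) = card (Odd_vertices d)"
    by (rule card_bij_eq[OF inj _ inj _ fin])
  moreover have "card (Even_vertices d) + card (Odd_vertices d) = 2 ^ d"
  proof -
    have "hc_vertices d = Even_vertices d \<union> Odd_vertices d" "Even_vertices d \<inter> Odd_vertices d = {}"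
      by (auto simp: Even_vertices_def Odd_vertices_def)
    then show ?thesis
      using card_Un_disjoint[OF fin] card_hc_vertices by metis
  qed
  moreover have "(2::nat) ^ d = 2 * 2 ^ (d - 1)"
    using assms by (cases d) auto
  ultimately show "card (Even_vertices d) = 2 ^ (d - 1)" "card (Odd_vertices d) = 2 ^ (d - 1)"
    by simp_all
qed

section \<open>Vertex weights\<close>

lemma finite_set_Qdp: "finite (set_pmf (Qdp d p))"
  unfolding Qdp_def by (rule finite_set_Pi_pmf[OF finite_hc_edges]) simp

lemma Np_eq_card_incident: "Np d G v = card {e \<in> hc_incident d v. G e}"
  unfolding Np_def hc_incident_def by (rule arg_cong[where f = card]) auto

lemma expectation_Np:
  assumes "0 \<le> p" "p \<le> 1" "u \<in> hc_vertices d"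
  shows "measure_pmf.expectation (Qdp d p) (\<lambda>G. (1/2::real) ^ Np d G u) = (1 - p/2) ^ d"
proof -
  have "measure_pmf.expectation (Qdp d p)
          (\<lambda>G. (1/2::real) ^ card {e \<in> hc_incident d u. G e} * 1 ^ card {e \<in> {}. G e})
      = (1 - p + p * (1/2)) ^ card (hc_incident d u)"
    unfolding Qdp_def using assms finite_hc_edges hc_incident_subset
    by (subst expectation_Pi_bernoulli_power_card) auto
  then show ?thesis
    using assms by (simp add: Np_eq_card_incident card_hc_incident)
qed

lemma expectation_Np_pair:
  assumes "0 \<le> p" "p \<le> 1" "u \<in> hc_vertices d" "v \<in> hc_vertices d"
  defines "k \<equiv> card (hc_incident d u \<inter> hc_incident d v)"
  shows "measure_pmf.expectation (Qdp d p) (\<lambda>G. (1/2::real) ^ Np d G u * (1/2) ^ Np d G v)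
       = ((1 - p/2)^2) ^ (d - k) * (1 - 3*p/4) ^ k"
proof -
  let ?A = "hc_incident d u" and ?B = "hc_incident d v"
  have "card (?A - ?B) = d - k" "card (?B - ?A) = d - k"
    using assms finite_subset[OF hc_incident_subset finite_hc_edges]
    by (simp_all add: card_Diff_subset_Int card_hc_incident Int_commute)
  moreover have "measure_pmf.expectation (Qdp d p) (\<lambda>G. (1/2::real) ^ Np d G u * (1/2) ^ Np d G v)
      = (1 - p + p * (1/2)) ^ card (?A - ?B) * (1 - p + p * (1/2)) ^ card (?B - ?A)
        * (1 - p + p * (1/2 * (1/2))) ^ k"
    unfolding Qdp_def Np_eq_card_incident k_def using assms(1,2) finite_hc_edges hc_incident_subset
    by (subst expectation_Pi_bernoulli_power_card) auto
  ultimately show ?thesis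
    by (simp add: power_mult_distrib power2_eq_square)
qed

lemma pmf_cov_Np:
  assumes "0 \<le> p" "p \<le> 1" "u \<in> hc_vertices d" "v \<in> hc_vertices d"
  shows "pmf_cov (Qdp d p) (\<lambda>G. (1/2::real) ^ Np d G u) (\<lambda>G. (1/2) ^ Np d G v)
       = (if u = v then (1 - 3*p/4) ^ d - ((1 - p/2)^2) ^ d
          else if {u, v} \<in> hc_edges d then (1 - 3*p/4 - (1 - p/2)^2) * ((1 - p/2)^2) ^ (d - 1)
          else 0)"
proof -
  let ?k = "card (hc_incident d u \<inter> hc_incident d v)"
  have cov: "pmf_cov (Qdp d p) (\<lambda>G. (1/2::real) ^ Np d G u) (\<lambda>G. (1/2) ^ Np d G v)
      = ((1 - p/2)^2) ^ (d - ?k) * (1 - 3*p/4) ^ ?k - ((1 - p/2)^2) ^ d"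
    using assms
    by (simp add: pmf_cov_eq finite_set_Qdp expectation_Np_pair expectation_Np power_mult_distrib power2_eq_square)
  consider "u = v" | "u \<noteq> v" "{u, v} \<in> hc_edges d" | "u \<noteq> v" "{u, v} \<notin> hc_edges d"
    by blast
  then show ?thesis
  proof cases
    case 1
    then show ?thesis
      using cov assms by (simp add: card_hc_incident)
  next
    case 2
    then have "0 < d"
      by (auto simp: doubleton_in_hc_edges_iff)
    then obtain n where "d = Suc n"
      using gr0_implies_Suc by blast
    with 2 show ?thesis
      using cov by (simp add: hc_incident_Int algebra_simps)
  next
    case 3
    then show ?thesis
      using cov by (simp add: hc_incident_Int)
  qed
qed

lemma expectation_sum_Np:
  assumes "0 \<le> p" "p \<le> 1" "P \<subseteq> hc_vertices d"
  shows "measure_pmf.expectation (Qdp d p) (\<lambda>G. \<Sum>v\<in>P. (1/2::real) ^ Np d G v) = card P * (1 - p/2) ^ d"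
proof -
  have "measure_pmf.expectation (Qdp d p) (\<lambda>G. \<Sum>v\<in>P. (1/2::real) ^ Np d G v)
      = (\<Sum>v\<in>P. measure_pmf.expectation (Qdp d p) (\<lambda>G. (1/2::real) ^ Np d G v))"
    by (simp add: integrable_measure_pmf_finite finite_set_Qdp)
  also have "\<dots> = (\<Sum>v\<in>P. (1 - p/2) ^ d)"
    using assms by (intro sum.cong) (auto simp: expectation_Np)
  finally show ?thesis
    by simp
qed

lemma variance_sum_Np_independent:
  assumes "0 \<le> p" "p \<le> 1" "P \<subseteq> hc_vertices d"
    and "\<And>u v. u \<in> P \<Longrightarrow> v \<in> P \<Longrightarrow> {u, v} \<notin> hc_edges d"
  shows "measure_pmf.variance (Qdp d p) (\<lambda>G. \<Sum>v\<in>P. (1/2::real) ^ Np d G v)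
       = card P * ((1 - 3*p/4) ^ d - ((1 - p/2)^2) ^ d)"
proof -
  have "finite P"
    using assms(3) finite_hc_vertices finite_subset by blast
  have "measure_pmf.variance (Qdp d p) (\<lambda>G. \<Sum>v\<in>P. (1/2::real) ^ Np d G v)
      = (\<Sum>u\<in>P. \<Sum>v\<in>P. if u = v then (1 - 3*p/4) ^ d - ((1 - p/2)^2) ^ d else 0)"
    unfolding variance_eq_pmf_cov pmf_cov_sum_sum[OF finite_set_Qdp]
    using assms by (intro sum.cong refl) (auto simp: pmf_cov_Np subset_iff)
  also have "\<dots> = card P * ((1 - 3*p/4) ^ d - ((1 - p/2)^2) ^ d)"
    using \<open>finite P\<close> by simp
  finally show ?thesis .
qed

lemma Phi_Even_eq_sum: "Phi_Even d = (\<lambda>G. \<Sum>v\<in>Even_vertices d. (1/2) ^ Np d G v)"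
  by (simp add: Phi_Even_def fun_eq_iff)

lemma Phi_Odd_eq_sum: "Phi_Odd d = (\<lambda>G. \<Sum>v\<in>Odd_vertices d. (1/2) ^ Np d G v)"
  by (simp add: Phi_Odd_def fun_eq_iff)

lemma expectation_Phi_Even_Odd:
  assumes "0 \<le> p" "p \<le> 1" "1 \<le> d"
  shows "measure_pmf.expectation (Qdp d p) (Phi_Even d) = (2 - p) ^ d / 2"
    and "measure_pmf.expectation (Qdp d p) (Phi_Odd d) = (2 - p) ^ d / 2"
proof -
  have "real (2 ^ (d - 1)) * (1 - p/2) ^ d = (2 - p) ^ d / 2"
    using assms(3) by (cases d) (auto simp: field_simps power_mult_distrib[symmetric])
  then show "measure_pmf.expectation (Qdp d p) (Phi_Even d) = (2 - p) ^ d / 2"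
    and "measure_pmf.expectation (Qdp d p) (Phi_Odd d) = (2 - p) ^ d / 2"
    using assms
    by (simp_all add: Phi_Even_eq_sum Phi_Odd_eq_sum expectation_sum_Np Even_Odd_subset_hc_vertices
                      card_Even_Odd_vertices)
qed

lemma variance_Phi_Even_Odd:
  assumes "0 \<le> p" "p \<le> 1"
  shows "measure_pmf.variance (Qdp d p) (Phi_Even d) = 2 ^ d / 2 * ((1 - 3*p/4) ^ d - ((1 - p/2)^2) ^ d)"
    and "measure_pmf.variance (Qdp d p) (Phi_Odd d) = 2 ^ d / 2 * ((1 - 3*p/4) ^ d - ((1 - p/2)^2) ^ d)"
proof -
  have "measure_pmf.variance (Qdp d p) (Phi_Even d)
          = card (Even_vertices d) * ((1 - 3*p/4) ^ d - ((1 - p/2)^2) ^ d)"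
       "measure_pmf.variance (Qdp d p) (Phi_Odd d)
          = card (Odd_vertices d) * ((1 - 3*p/4) ^ d - ((1 - p/2)^2) ^ d)"
    unfolding Phi_Even_eq_sum Phi_Odd_eq_sum using assms
    by (intro variance_sum_Np_independent Even_Odd_subset_hc_vertices;
        auto simp: Even_vertices_def Odd_vertices_def dest: hc_edge_parity)+
  then show "measure_pmf.variance (Qdp d p) (Phi_Even d) = 2 ^ d / 2 * ((1 - 3*p/4) ^ d - ((1 - p/2)^2) ^ d)"
    and "measure_pmf.variance (Qdp d p) (Phi_Odd d) = 2 ^ d / 2 * ((1 - 3*p/4) ^ d - ((1 - p/2)^2) ^ d)"
    by (cases d; simp add: card_Even_Odd_vertices)+
qed

lemma pmf_cov_Phi_Even_Odd:
  assumes "0 \<le> p" "p \<le> 1"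
  shows "pmf_cov (Qdp d p) (Phi_Even d) (Phi_Odd d)
       = card (Even_vertices d) * d * ((1 - 3*p/4 - (1 - p/2)^2) * ((1 - p/2)^2) ^ (d - 1))"
proof -
  define c where "c = (1 - 3*p/4 - (1 - p/2)^2) * ((1 - p/2)^2) ^ (d - 1)"
  have "{v \<in> Odd_vertices d. {u, v} \<in> hc_edges d} = hc_neighbours d u" if "u \<in> Even_vertices d" for u
    using that hc_neighbours_subset[of d u]
    by (auto simp: hc_neighbours_def Odd_vertices_def Even_vertices_def)
  then have "(\<Sum>v\<in>Odd_vertices d. if {u, v} \<in> hc_edges d then c else 0) = d * c"
    if "u \<in> Even_vertices d" for u
    using that finite_subset[OF Even_Odd_subset_hc_vertices(2) finite_hc_vertices]
    by (simp add: sum.inter_filter[symmetric] card_hc_neighbours Even_vertices_def)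
  moreover have "pmf_cov (Qdp d p) (Phi_Even d) (Phi_Odd d)
      = (\<Sum>u\<in>Even_vertices d. \<Sum>v\<in>Odd_vertices d. if {u, v} \<in> hc_edges d then c else 0)"
    unfolding Phi_Even_eq_sum Phi_Odd_eq_sum pmf_cov_sum_sum[OF finite_set_Qdp] c_def
    using assms
    by (intro sum.cong refl) (auto simp: pmf_cov_Np Even_vertices_def Odd_vertices_def)
  ultimately show ?thesis
    by (simp add: c_def)
qed

section \<open>Asymptotics\<close>

lemma power_diff_asymp_equiv:
  fixes a b :: real
  assumes "0 \<le> b" "b < a"
  shows "(\<lambda>n. a ^ n - b ^ n) \<sim>[sequentially] (\<lambda>n. a ^ n)"
proof (rule asymp_equivI')
  have "(\<lambda>n. 1 - (b / a) ^ n) \<longlonglongrightarrow> 1 - 0"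
    using assms by (intro tendsto_diff tendsto_const LIMSEQ_power_zero) simp
  moreover have "(a ^ n - b ^ n) / a ^ n = 1 - (b / a) ^ n" for n
    using assms by (simp add: field_simps power_divide)
  ultimately show "(\<lambda>n. (a ^ n - b ^ n) / a ^ n) \<longlonglongrightarrow> 1"
    by simp
qed

lemma real_times_power_smallo:
  fixes r c :: real
  assumes "0 \<le> r" "r < c"
  shows "(\<lambda>n. real n * r ^ n) \<in> o(\<lambda>n. c ^ n)"
proof (rule smalloI_tendsto)
  have "(\<lambda>n. real n * (r / c) ^ n) \<longlonglongrightarrow> 0"
    using assms by (intro powser_times_n_limit_0) simp
  then show "(\<lambda>n. real n * r ^ n / c ^ n) \<longlonglongrightarrow> 0"
    by (simp add: power_divide)
  show "eventually (\<lambda>n. c ^ n \<noteq> 0) sequentially"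
    using assms by simp
qed

lemma power_diff_ratio_le:
  fixes a b :: real
  assumes "0 < b" "b < a"
  shows "(a - b) * b ^ n / (a ^ Suc n - b ^ Suc n) \<le> (b / a) ^ n"
proof -
  have "b ^ n * b \<le> a ^ n * b"
    using assms by (intro mult_right_mono power_mono) auto
  then have "a ^ n * (a - b) \<le> a ^ Suc n - b ^ Suc n"
    by (simp add: algebra_simps)
  moreover have "0 < a ^ n * (a - b)"
    using assms by simp
  moreover have "0 < a ^ Suc n - b ^ Suc n"
    using calculation by linarith
  ultimately have "(a - b) * b ^ n / (a ^ Suc n - b ^ Suc n) \<le> (a - b) * b ^ n / (a ^ n * (a - b))"
    using assms by (intro divide_left_mono mult_pos_pos) auto
  also have "\<dots> = (b / a) ^ n"
    using assms by (simp add: power_divide)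
  finally show ?thesis .
qed

lemma one_minus_half_sq_bounds:
  fixes p :: real
  assumes "0 < p" "p < 1"
  shows "0 < (1 - p/2)^2" "(1 - p/2)^2 < 1 - 3*p/4"
proof -
  show "0 < (1 - p/2)^2"
    using assms by simp
  have "p * p < p"
    using assms by (simp add: mult_less_cancel_left1)
  then show "(1 - p/2)^2 < 1 - 3*p/4"
    by (simp add: power2_eq_square algebra_simps)
qed

lemma cov_variance_ratio_Phi:
  fixes p :: real
  assumes "0 \<le> p" "p \<le> 1"
  defines "a \<equiv> 1 - 3*p/4" and "b \<equiv> (1 - p/2)^2"
  shows "pmf_cov (Qdp (Suc n) p) (Phi_Even (Suc n)) (Phi_Odd (Suc n))
           / measure_pmf.variance (Qdp (Suc n) p) (Phi_Even (Suc n))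
       = real (Suc n) * ((a - b) * b ^ n / (a ^ Suc n - b ^ Suc n))"
proof -
  have "card (Even_vertices (Suc n)) = 2 ^ n"
    using card_Even_Odd_vertices by simp
  then have "pmf_cov (Qdp (Suc n) p) (Phi_Even (Suc n)) (Phi_Odd (Suc n))
      = 2 ^ n * (real (Suc n) * ((a - b) * b ^ n))"
    using assms by (simp add: pmf_cov_Phi_Even_Odd distrib_left)
  moreover have "measure_pmf.variance (Qdp (Suc n) p) (Phi_Even (Suc n)) = 2 ^ n * (a ^ Suc n - b ^ Suc n)"
    using assms by (simp add: variance_Phi_Even_Odd)
  ultimately show ?thesis
    by simp
qed

lemma cov_variance_ratio_Phi_bigo:
  fixes p :: real
  assumes "0 < p" "p < 1"
  defines "r \<equiv> (1 - p/2)^2 / (1 - 3*p/4)"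
  shows "(\<lambda>d. pmf_cov (Qdp d p) (Phi_Even d) (Phi_Odd d) / measure_pmf.variance (Qdp d p) (Phi_Even d))
           \<in> O(\<lambda>d. real d * r ^ d)"
proof (rule bigoI)
  define a b where "a = 1 - 3*p/4" and "b = (1 - p/2)^2"
  have ab: "0 < b" "b < a"
    using one_minus_half_sq_bounds[OF assms(1,2)] by (simp_all add: a_def b_def)
  have r: "r = b / a"
    by (simp add: r_def a_def b_def)
  with ab have "0 < r"
    by simp
  have "norm (pmf_cov (Qdp d p) (Phi_Even d) (Phi_Odd d) / measure_pmf.variance (Qdp d p) (Phi_Even d))
          \<le> 1 / r * norm (real d * r ^ d)" for d
  proof (cases d)
    case 0
    then show ?thesis
      using assms by (simp add: pmf_cov_Phi_Even_Odd)
  next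
    case (Suc n)
    have "b ^ Suc n < a ^ Suc n"
      using ab by (intro power_strict_mono) auto
    then have "0 \<le> real d * ((a - b) * b ^ n / (a ^ Suc n - b ^ Suc n))"
      using ab by (intro mult_nonneg_nonneg divide_nonneg_nonneg) auto
    moreover have "pmf_cov (Qdp d p) (Phi_Even d) (Phi_Odd d) / measure_pmf.variance (Qdp d p) (Phi_Even d)
        = real d * ((a - b) * b ^ n / (a ^ Suc n - b ^ Suc n))"
      unfolding Suc a_def b_def using assms by (intro cov_variance_ratio_Phi) auto
    ultimately have "norm (pmf_cov (Qdp d p) (Phi_Even d) (Phi_Odd d) / measure_pmf.variance (Qdp d p) (Phi_Even d))
        = real d * ((a - b) * b ^ n / (a ^ Suc n - b ^ Suc n))"
      by (simp only: real_norm_def abs_of_nonneg)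
    also have "\<dots> \<le> real d * r ^ n"
      using power_diff_ratio_le[OF ab, of n] r by (intro mult_left_mono) auto
    also have "\<dots> = 1 / r * norm (real d * r ^ d)"
      using \<open>0 < r\<close> Suc by (simp add: abs_mult)
    finally show ?thesis .
  qed
  then show "eventually (\<lambda>d. norm (pmf_cov (Qdp d p) (Phi_Even d) (Phi_Odd d)
              / measure_pmf.variance (Qdp d p) (Phi_Even d)) \<le> 1 / r * norm (real d * r ^ d)) sequentially"
    by simp
qed

lemma variance_Phi_Even_asymp_equiv:
  fixes p :: real
  assumes "0 < p" "p < 1"
  shows "(\<lambda>d. measure_pmf.variance (Qdp d p) (Phi_Even d)) \<sim>[sequentially] (\<lambda>d. (1/2) * ((4 - 3*p)/2) ^ d)"
proof -
  define a b where "a = 1 - 3*p/4" and "b = (1 - p/2)^2"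
  have "(\<lambda>d. 2 ^ d / 2 * (a ^ d - b ^ d)) \<sim>[sequentially] (\<lambda>d. 2 ^ d / 2 * a ^ d)"
    using one_minus_half_sq_bounds[OF assms]
    by (intro asymp_equiv_mult asymp_equiv_refl power_diff_asymp_equiv) (auto simp: a_def b_def)
  moreover have "2 ^ d / 2 * a ^ d = 1/2 * ((4 - 3*p)/2) ^ d" for d
  proof -
    have "2 * a = (4 - 3*p)/2"
      by (simp add: a_def)
    then show ?thesis
      unfolding \<open>2 * a = (4 - 3*p)/2\<close>[symmetric] by (simp add: power_mult_distrib)
  qed
  ultimately show ?thesis
    using assms by (simp add: variance_Phi_Even_Odd a_def b_def)
qed

theorem lemma3p4:
  fixes p :: real
  assumes "0 < p" and "p < 1"
  shows "(\<forall>d\<ge>1. measure_pmf.expectation (Qdp d p) (Phi_Even d) = (2 - p) ^ d / 2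
               \<and> measure_pmf.expectation (Qdp d p) (Phi_Odd d) = (2 - p) ^ d / 2)
       \<and> (\<forall>d. measure_pmf.variance (Qdp d p) (Phi_Even d) = measure_pmf.variance (Qdp d p) (Phi_Odd d))
       \<and> (\<lambda>d. measure_pmf.variance (Qdp d p) (Phi_Even d)) \<sim>[sequentially] (\<lambda>d. (1/2) * ((4 - 3*p)/2) ^ d)
       \<and> (\<exists>c::real. 0 < c \<and> c < 1 \<and>
            (\<lambda>d. pmf_cov (Qdp d p) (Phi_Even d) (Phi_Odd d) / measure_pmf.variance (Qdp d p) (Phi_Even d))
              \<in> O(\<lambda>d. c ^ d))"
proof -
  define r where "r = (1 - p/2)^2 / (1 - 3*p/4)"
  define c where "c = (1 + r) / 2"
  have "0 < r" "r < 1"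
    using assms one_minus_half_sq_bounds[OF assms] unfolding r_def
    by (simp_all add: zero_less_divide_iff divide_less_eq_1)
  then have c: "0 < c" "c < 1" "r < c"
    by (simp_all add: c_def)
  have "(\<lambda>d. pmf_cov (Qdp d p) (Phi_Even d) (Phi_Odd d) / measure_pmf.variance (Qdp d p) (Phi_Even d))
          \<in> O(\<lambda>d. c ^ d)"
    using cov_variance_ratio_Phi_bigo[OF assms, folded r_def]
      real_times_power_smallo[OF less_imp_le[OF \<open>0 < r\<close>] \<open>r < c\<close>]
    by (rule landau_o.big_small_trans')
  with c variance_Phi_Even_asymp_equiv[OF assms] show ?thesis
    using assms by (auto simp: expectation_Phi_Even_Odd variance_Phi_Even_Odd)
qed

end
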